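(* Let $q$ be a prime power, $m\geq1$, $n\geq2$, and let $r=(r_1,\ldots,r_n)\in\mathbb{F}_{q^m}^n$ with $\mathbb{F}_q(r_1,\ldots,r_n)=\mathbb{F}_{q^m}$. Let $m_i=[\mathbb{F}_q(r_i):\mathbb{F}_q]$ and suppose $m_1\geq m_2\geq\cdots\geq m_n$ with at least one strict inequality. Then there exists $f\in\mathbb{F}_q[X_1,\ldots,X_{n-1}]$ such that $[\mathbb{F}_q(r_n+f(r_1,\ldots,r_{n-1})):\mathbb{F}_q]>m_n$. *)

theory Defs
  imports Main "HOL-Library.Poly_Mapping"
begin

definition is_subfield :: "'a::field set \<Rightarrow> bool" where
  "is_subfield S \<longleftrightarrow> 0 \<in> S \<and> 1 \<in> S \<and>
     (\<forall>x\<in>S. \<forall>y\<in>S. x + y \<in> S \<and> x * y \<in> S) \<and>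
     (\<forall>x\<in>S. - x \<in> S \<and> inverse x \<in> S)"

definition gen_field :: "'a::field set \<Rightarrow> 'a set \<Rightarrow> 'a set" where
  "gen_field S A = \<Inter> {T. is_subfield T \<and> S \<union> A \<subseteq> T}"

definition span_over :: "'a::field set \<Rightarrow> 'a set \<Rightarrow> 'a set" where
  "span_over S B = {\<Sum>b\<in>B. c b * b | c. \<forall>b\<in>B. c b \<in> S}"

definition ext_degree :: "'a::field set \<Rightarrow> 'a set \<Rightarrow> nat" where
  "ext_degree S E = (LEAST d. \<exists>B. finite B \<and> card B = d \<and> B \<subseteq> E \<and> E \<subseteq> span_over S B)"

text \<open>Multivariate polynomials: finitely supported maps from monomials (finitely
  supported exponent vectors, variables indexed by nat) to coefficients.
  Evaluation at the point r.\<close>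
definition mpoly_eval :: "((nat \<Rightarrow>\<^sub>0 nat) \<Rightarrow>\<^sub>0 'a::field) \<Rightarrow> (nat \<Rightarrow> 'a) \<Rightarrow> 'a" where
  "mpoly_eval f r = (\<Sum>mn\<in>Poly_Mapping.keys f. Poly_Mapping.lookup f mn * (\<Prod>i\<in>Poly_Mapping.keys (mn :: nat \<Rightarrow>\<^sub>0 nat). r i ^ Poly_Mapping.lookup mn i))"

end

theory Submission
  imports Defs "HOL-Library.FuncSet" "HOL-Computational_Algebra.Polynomial"
begin

text \<open>Let k < m_1 be the degree of r_n over F_q (in the formal statement r_1 is r 0 and r_n is
  r (n - 1)). An element of degree d is a root of X^(q^d) - X, so fewer than
  q + ... + q^k < q^(k+1) elements have degree at most k. The translates r_n + t with t in F_q(r_1)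
  are q^(m_1) >= q^(k+1) distinct elements, so one of them has degree greater than k. Finally,
  over a finite field F_q(r_1) = F_q[r_1], so t = f(r_1) for a polynomial f over F_q.\<close>

lemma
  assumes "is_subfield T"
  shows subfield_zero: "0 \<in> T"
    and subfield_one: "1 \<in> T"
    and subfield_add: "x \<in> T \<Longrightarrow> y \<in> T \<Longrightarrow> x + y \<in> T"
    and subfield_mult: "x \<in> T \<Longrightarrow> y \<in> T \<Longrightarrow> x * y \<in> T"
    and subfield_uminus: "x \<in> T \<Longrightarrow> - x \<in> T"
    and subfield_inverse: "x \<in> T \<Longrightarrow> inverse x \<in> T"
    and subfield_diff: "x \<in> T \<Longrightarrow> y \<in> T \<Longrightarrow> x - y \<in> T"
    and subfield_divide: "x \<in> T \<Longrightarrow> y \<in> T \<Longrightarrow> x / y \<in> T"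
  using assms unfolding is_subfield_def diff_conv_add_uminus divide_inverse by blast+

lemma subfield_sum:
  "is_subfield T \<Longrightarrow> (\<And>a. a \<in> A \<Longrightarrow> f a \<in> T) \<Longrightarrow> sum f A \<in> T"
  by (induction A rule: infinite_finite_induct) (auto simp: subfield_zero subfield_add)

lemma subfield_UNIV: "is_subfield UNIV"
  unfolding is_subfield_def by auto

lemma is_subfield_gen_field: "is_subfield (gen_field S A)"
  unfolding gen_field_def is_subfield_def by (auto simp: Ball_def)

lemma gen_field_upper: "S \<union> A \<subseteq> gen_field S A"
  unfolding gen_field_def by auto

lemma gen_field_least: "is_subfield T \<Longrightarrow> S \<union> A \<subseteq> T \<Longrightarrow> gen_field S A \<subseteq> T"
  unfolding gen_field_def by auto

lemma card_subfield_ge_2: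
  fixes L :: "'a::field set"
  assumes "is_subfield L" "finite L"
  shows "2 \<le> card L"
proof -
  have "{0, 1} \<subseteq> L" using subfield_zero[OF assms(1)] subfield_one[OF assms(1)] by blast
  then have "card {0::'a, 1} \<le> card L" by (rule card_mono[OF assms(2)])
  then show ?thesis by simp
qed

lemma subfield_power_card_minus_one:
  fixes L :: "'a::field set"
  assumes L: "is_subfield L" "finite L" and x: "x \<in> L" "x \<noteq> 0"
  shows "x ^ (card L - 1) = 1"
proof -
  let ?M = "L - {0}"
  have "bij_betw (\<lambda>y. x * y) ?M ?M"
  proof (rule bij_betwI')
    fix y assume y: "y \<in> ?M"
    show "x * y \<in> ?M" using x y subfield_mult[OF L(1)] by auto
    show "\<exists>a\<in>?M. y = x * a"
      using x y subfield_mult[OF L(1)] subfield_inverse[OF L(1)]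
      by (intro bexI[of _ "inverse x * y"]) auto
  qed (use x in auto)
  then have "prod (\<lambda>y. y) ?M = prod (\<lambda>y. x * y) ?M"
    using prod.reindex_bij_betw[of "\<lambda>y. x * y" ?M ?M "\<lambda>y. y"] by simp
  also have "\<dots> = x ^ card ?M * prod (\<lambda>y. y) ?M"
    by (simp add: prod.distrib)
  finally have "x ^ card ?M = 1"
    using L(2) by (simp add: prod_zero_iff)
  moreover have "card ?M = card L - 1"
    using subfield_zero[OF L(1)] by (rule card_Diff_singleton)
  ultimately show ?thesis by simp
qed

lemma subfield_power_card:
  fixes L :: "'a::field set"
  assumes L: "is_subfield L" "finite L" and x: "x \<in> L"
  shows "x ^ card L = x"
proof (cases "x = 0")
  case True
  then show ?thesis using card_subfield_ge_2[OF L] by simp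
next
  case False
  have "x ^ card L = x * x ^ (card L - 1)"
    using card_subfield_ge_2[OF L] by (simp flip: power_Suc)
  then show ?thesis using subfield_power_card_minus_one[OF L x False] by simp
qed

subsection \<open>Cardinality of a vector space over a subfield\<close>

definition is_subspace_over :: "'a::field set \<Rightarrow> 'a set \<Rightarrow> bool" where
  "is_subspace_over S E \<longleftrightarrow>
     0 \<in> E \<and> (\<forall>x\<in>E. \<forall>y\<in>E. x + y \<in> E) \<and> (\<forall>a\<in>S. \<forall>x\<in>E. a * x \<in> E)"

definition independent_over :: "'a::field set \<Rightarrow> 'a set \<Rightarrow> bool" where
  "independent_over S B \<longleftrightarrow>
     (\<forall>c. (\<forall>b\<in>B. c b \<in> S) \<and> (\<Sum>b\<in>B. c b * b) = 0 \<longrightarrow> (\<forall>b\<in>B. c b = 0))"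

context
  fixes S :: "'a::field set"
  assumes S: "is_subfield S"
begin

lemma subfield_is_subspace_over: "is_subfield L \<Longrightarrow> S \<subseteq> L \<Longrightarrow> is_subspace_over S L"
  unfolding is_subspace_over_def using subfield_zero subfield_add subfield_mult by blast

lemma is_subspace_over_span_over: "is_subspace_over S (span_over S B)"
  unfolding is_subspace_over_def
proof (intro conjI ballI)
  show "0 \<in> span_over S B"
    unfolding span_over_def by (auto intro!: exI[of _ "\<lambda>_. 0"] simp: subfield_zero[OF S])
  fix x y assume "x \<in> span_over S B" "y \<in> span_over S B"
  then obtain c d where "x = (\<Sum>b\<in>B. c b * b)" "\<forall>b\<in>B. c b \<in> S"
      "y = (\<Sum>b\<in>B. d b * b)" "\<forall>b\<in>B. d b \<in> S"
    unfolding span_over_def by blast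
  then show "x + y \<in> span_over S B" unfolding span_over_def
    by (intro CollectI exI[of _ "\<lambda>b. c b + d b"])
      (auto simp: subfield_add[OF S] sum.distrib algebra_simps)
next
  fix a x assume "a \<in> S" "x \<in> span_over S B"
  moreover from this obtain c where "x = (\<Sum>b\<in>B. c b * b)" "\<forall>b\<in>B. c b \<in> S"
    unfolding span_over_def by blast
  ultimately show "a * x \<in> span_over S B" unfolding span_over_def
    by (intro CollectI exI[of _ "\<lambda>b. a * c b"])
      (auto simp: subfield_mult[OF S] sum_distrib_left algebra_simps)
qed

lemma span_over_base:
  assumes "finite B" "x \<in> B"
  shows "x \<in> span_over S B"
proof -
  have "(\<Sum>b\<in>B. (if b = x then 1 else 0) * b) = (\<Sum>b\<in>B. if b = x then x else 0)"
    by (rule sum.cong) auto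
  then have "x = (\<Sum>b\<in>B. (if b = x then 1 else 0) * b)"
    using assms by simp
  then show ?thesis
    unfolding span_over_def using subfield_zero[OF S] subfield_one[OF S] by force
qed

lemma span_over_minimal:
  assumes E: "is_subspace_over S E" and "B \<subseteq> E"
  shows "span_over S B \<subseteq> E"
proof
  fix x assume "x \<in> span_over S B"
  then obtain c where x: "x = (\<Sum>b\<in>B. c b * b)" and c: "\<forall>b\<in>B. c b \<in> S"
    unfolding span_over_def by blast
  have "(\<Sum>b\<in>B. c b * b) \<in> E" using c \<open>B \<subseteq> E\<close>
    by (induction B rule: infinite_finite_induct) (use E in \<open>auto simp: is_subspace_over_def\<close>)
  then show "x \<in> E" using x by simp
qed

lemma span_over_remove_dependent:
  assumes B: "finite B" and c: "\<forall>b\<in>B. c b \<in> S" "(\<Sum>b\<in>B. c b * b) = 0"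
    and b0: "b0 \<in> B" "c b0 \<noteq> 0"
  shows "span_over S B \<subseteq> span_over S (B - {b0})"
proof (rule span_over_minimal[OF is_subspace_over_span_over], rule subsetI)
  fix x assume "x \<in> B"
  let ?T = "\<Sum>b\<in>B - {b0}. c b * b"
  have "c b0 * b0 + ?T = 0" using c(2) b0 B by (simp add: sum.remove)
  then have "b0 = - ?T / c b0"
    using b0(2) by (simp add: field_simps eq_neg_iff_add_eq_0)
  also have "\<dots> = (\<Sum>b\<in>B - {b0}. (- c b / c b0) * b)"
    by (simp add: sum_divide_distrib sum_negf)
  also have "\<dots> \<in> span_over S (B - {b0})"
    unfolding span_over_def
  proof (intro CollectI exI conjI)
    show "\<forall>b\<in>B - {b0}. - c b / c b0 \<in> S"
      using c(1) b0(1) subfield_uminus[OF S] subfield_divide[OF S] by blast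
  qed (rule refl)
  finally show "x \<in> span_over S (B - {b0})"
    using B \<open>x \<in> B\<close> span_over_base by (cases "x = b0") auto
qed

lemma card_span_over_independent:
  assumes B: "finite B" and ind: "independent_over S B"
  shows "card (span_over S B) = card S ^ card B"
proof -
  let ?g = "\<lambda>c. \<Sum>b\<in>B. c b * b"
  have "inj_on ?g (B \<rightarrow>\<^sub>E S)"
  proof (rule inj_onI)
    fix c d assume c: "c \<in> B \<rightarrow>\<^sub>E S" and d: "d \<in> B \<rightarrow>\<^sub>E S" and "?g c = ?g d"
    then have "(\<Sum>b\<in>B. (c b - d b) * b) = 0"
      by (simp add: algebra_simps sum_subtractf)
    moreover have "\<forall>b\<in>B. c b - d b \<in> S" using c d subfield_diff[OF S] by blast
    ultimately have "\<forall>b\<in>B. c b - d b = 0"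
      using ind[unfolded independent_over_def, THEN spec[of _ "\<lambda>b. c b - d b"]] by blast
    then show "c = d" using PiE_ext[OF c d] by simp
  qed
  moreover have "?g ` (B \<rightarrow>\<^sub>E S) = span_over S B"
  proof
    show "?g ` (B \<rightarrow>\<^sub>E S) \<subseteq> span_over S B" unfolding span_over_def by auto
    show "span_over S B \<subseteq> ?g ` (B \<rightarrow>\<^sub>E S)"
    proof
      fix x assume "x \<in> span_over S B"
      then obtain c where "x = ?g c" "\<forall>b\<in>B. c b \<in> S"
        unfolding span_over_def by blast
      then show "x \<in> ?g ` (B \<rightarrow>\<^sub>E S)"
        by (intro image_eqI[of _ _ "restrict c B"]) auto
    qed
  qed
  ultimately have "card (span_over S B) = card (B \<rightarrow>\<^sub>E S)"
    using card_image by fastforce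
  also have "\<dots> = card S ^ card B" using B by (simp add: card_PiE)
  finally show ?thesis .
qed

lemma ext_degree_spanning_set:
  assumes "finite E"
  obtains B where "finite B" "card B = ext_degree S E" "B \<subseteq> E" "E \<subseteq> span_over S B"
proof -
  have "\<exists>B. finite B \<and> card B = card E \<and> B \<subseteq> E \<and> E \<subseteq> span_over S B"
    using assms span_over_base by blast
  then have "\<exists>B. finite B \<and> card B = ext_degree S E \<and> B \<subseteq> E \<and> E \<subseteq> span_over S B"
    unfolding ext_degree_def by (rule LeastI_ex[OF exI])
  then show thesis using that by blast
qed

lemma ext_degree_le_card:
  "finite B \<Longrightarrow> B \<subseteq> E \<Longrightarrow> E \<subseteq> span_over S B \<Longrightarrow> ext_degree S E \<le> card B"
  unfolding ext_degree_def by (rule Least_le) blast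

lemma card_subspace_over:
  assumes E: "is_subspace_over S E" "finite E"
  shows "card E = card S ^ ext_degree S E"
proof -
  obtain B where B: "finite B" "card B = ext_degree S E" "B \<subseteq> E" "E \<subseteq> span_over S B"
    using ext_degree_spanning_set[OF E(2)] .
  have "independent_over S B"
    unfolding independent_over_def
  proof (intro allI impI ballI, rule ccontr)
    fix c b0 assume "(\<forall>b\<in>B. c b \<in> S) \<and> (\<Sum>b\<in>B. c b * b) = 0" "b0 \<in> B" "c b0 \<noteq> 0"
    then have "E \<subseteq> span_over S (B - {b0})"
      using B(1,4) span_over_remove_dependent by blast
    then have "ext_degree S E \<le> card (B - {b0})"
      using B ext_degree_le_card by blast
    then show False using B \<open>b0 \<in> B\<close> card_Diff1_less by fastforce
  qed
  moreover have "E = span_over S B" using B span_over_minimal[OF E(1)] by auto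
  ultimately show ?thesis using card_span_over_independent B by simp
qed

lemma card_subfield_ext_degree:
  "is_subfield L \<Longrightarrow> S \<subseteq> L \<Longrightarrow> finite L \<Longrightarrow> card L = card S ^ ext_degree S L"
  by (intro card_subspace_over subfield_is_subspace_over)

end

subsection \<open>Counting elements of small degree\<close>

lemma card_roots_power_eq_self:
  assumes "2 \<le> Q"
  shows "card {x::'a::idom. x ^ Q = x} \<le> Q"
proof -
  let ?p = "monom (1::'a) Q - [:0, 1:]"
  have "coeff ?p Q = 1" using assms by (simp add: coeff_monom coeff_pCons split: nat.split)
  then have "?p \<noteq> 0" by (metis coeff_0 zero_neq_one)
  then have "card {x. poly ?p x = 0} \<le> degree ?p" by (rule card_poly_roots_bound)
  also have "degree ?p \<le> Q"
    using assms by (intro degree_diff_le) (auto simp: degree_monom_le)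
  finally show ?thesis by (simp add: poly_monom)
qed

lemma sum_powers_less_power:
  fixes q :: nat assumes "2 \<le> q"
  shows "(\<Sum>d = 1..k. q ^ d) < q ^ (k + 1)"
proof (induction k)
  case (Suc k)
  have "(\<Sum>d = 1..Suc k. q ^ d) < q ^ (k + 1) + q ^ (k + 1)"
    using Suc.IH by (simp add: sum.cl_ivl_Suc)
  also have "\<dots> = 2 * q ^ (k + 1)" by simp
  also have "\<dots> \<le> q * q ^ (k + 1)" using assms by (intro mult_right_mono) auto
  finally show ?case by simp
qed (use assms in simp)

context
  fixes S :: "'a::{field,finite} set"
  assumes S: "is_subfield S"
begin

lemma card_gen_field_singleton: "card (gen_field S {x}) = card S ^ ext_degree S (gen_field S {x})"
  using card_subfield_ext_degree[OF S is_subfield_gen_field] gen_field_upper[of S "{x}"] by simp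

lemma power_card_ext_degree: "x ^ (card S ^ ext_degree S (gen_field S {x})) = x"
  using subfield_power_card[OF is_subfield_gen_field, of S "{x}" x] gen_field_upper[of S "{x}"]
  by (simp flip: card_gen_field_singleton)

lemma ext_degree_gen_field_pos: "1 \<le> ext_degree S (gen_field S {x})"
  using card_subfield_ge_2[OF is_subfield_gen_field, of S "{x}"]
  by (cases "ext_degree S (gen_field S {x})") (simp_all add: card_gen_field_singleton)

lemma card_ext_degree_le_less:
  "card {x. ext_degree S (gen_field S {x}) \<le> k} < card S ^ (k + 1)"
proof -
  let ?q = "card S"
  have q: "2 \<le> ?q" using card_subfield_ge_2[OF S] by simp
  have "{x. ext_degree S (gen_field S {x}) \<le> k} \<subseteq> (\<Union>d\<in>{1..k}. {x. x ^ (?q ^ d) = x})"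
    using power_card_ext_degree ext_degree_gen_field_pos by fastforce
  then have "card {x. ext_degree S (gen_field S {x}) \<le> k}
      \<le> card (\<Union>d\<in>{1..k}. {x::'a. x ^ (?q ^ d) = x})"
    by (intro card_mono) auto
  also have "\<dots> \<le> (\<Sum>d = 1..k. card {x::'a. x ^ (?q ^ d) = x})"
    by (rule card_UN_le) simp
  also have "\<dots> \<le> (\<Sum>d = 1..k. ?q ^ d)"
  proof (rule sum_mono)
    fix d :: nat assume "d \<in> {1..k}"
    then have "?q ^ 1 \<le> ?q ^ d" using q by (intro power_increasing) auto
    then show "card {x::'a. x ^ (?q ^ d) = x} \<le> ?q ^ d"
      using q by (intro card_roots_power_eq_self) simp
  qed
  also have "\<dots> < ?q ^ (k + 1)" using sum_powers_less_power[OF q] .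
  finally show ?thesis .
qed

lemma ex_translate_ext_degree_gt:
  assumes L: "is_subfield L" "S \<subseteq> L" and k: "k < ext_degree S L"
  shows "\<exists>t\<in>L. k < ext_degree S (gen_field S {a + t})"
proof (rule ccontr)
  assume "\<not> ?thesis"
  then have "(+) a ` L \<subseteq> {x. ext_degree S (gen_field S {x}) \<le> k}"
    by auto
  then have "card ((+) a ` L) \<le> card {x. ext_degree S (gen_field S {x}) \<le> k}"
    by (intro card_mono) auto
  moreover have "card ((+) a ` L) = card L" by (rule card_image) (simp add: inj_on_def)
  moreover have "card S ^ (k + 1) \<le> card S ^ ext_degree S L"
    using card_subfield_ge_2[OF S] k by (intro power_increasing) simp_all
  ultimately show False
    using card_ext_degree_le_less[of k] card_subfield_ext_degree[OF S L] by simp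
qed

end

subsection \<open>A simple extension of a finite field is a polynomial ring\<close>

definition poly_vals :: "'a::comm_semiring_1 set \<Rightarrow> 'a \<Rightarrow> 'a set" where
  "poly_vals S x = {poly p x | p. \<forall>i. coeff p i \<in> S}"

context
  fixes S :: "'a::{field,finite} set"
  assumes S: "is_subfield S"
begin

lemma poly_vals_const: "c \<in> S \<Longrightarrow> c \<in> poly_vals S x"
  unfolding poly_vals_def
  by (intro CollectI exI[of _ "[:c:]"]) (simp add: coeff_pCons subfield_zero[OF S] split: nat.split)

lemma poly_vals_var: "x \<in> poly_vals S x"
  unfolding poly_vals_def
  by (intro CollectI exI[of _ "[:0, 1:]"])
    (simp add: coeff_pCons subfield_zero[OF S] subfield_one[OF S] split: nat.split)

lemma poly_vals_add: "a \<in> poly_vals S x \<Longrightarrow> b \<in> poly_vals S x \<Longrightarrow> a + b \<in> poly_vals S x"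
  unfolding poly_vals_def by (force intro: exI[of _ "_ + _"] simp: subfield_add[OF S])

lemma poly_vals_uminus: "a \<in> poly_vals S x \<Longrightarrow> - a \<in> poly_vals S x"
  unfolding poly_vals_def by (force intro: exI[of _ "- _"] simp: subfield_uminus[OF S])

lemma poly_vals_mult:
  assumes "a \<in> poly_vals S x" "b \<in> poly_vals S x"
  shows "a * b \<in> poly_vals S x"
proof -
  obtain p q where pq: "a = poly p x" "b = poly q x" "\<forall>i. coeff p i \<in> S" "\<forall>i. coeff q i \<in> S"
    using assms unfolding poly_vals_def by blast
  then have "\<forall>i. coeff (p * q) i \<in> S"
    unfolding coeff_mult by (intro allI subfield_sum[OF S] subfield_mult[OF S]) auto
  then show ?thesis unfolding poly_vals_def using pq by (auto intro!: exI[of _ "p * q"])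
qed

lemma poly_vals_power: "a \<in> poly_vals S x \<Longrightarrow> a ^ k \<in> poly_vals S x"
  by (induction k) (auto intro: poly_vals_mult poly_vals_const subfield_one[OF S])

lemma poly_vals_inverse: "a \<in> poly_vals S x \<Longrightarrow> inverse a \<in> poly_vals S x"
proof (cases "a = 0")
  case False
  have "2 \<le> card (UNIV :: 'a set)"
    using card_subfield_ge_2[of "UNIV :: 'a set"] subfield_UNIV by simp
  then have "card (UNIV :: 'a set) - 1 = Suc (card (UNIV :: 'a set) - 2)"
    by simp
  then have "a * a ^ (card (UNIV :: 'a set) - 2) = a ^ (card (UNIV :: 'a set) - 1)"
    by simp
  also have "\<dots> = 1"
    using subfield_power_card_minus_one[of "UNIV :: 'a set" a] subfield_UNIV False by simp
  finally have "inverse a = a ^ (card (UNIV :: 'a set) - 2)" by (rule inverse_unique)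
  then show "a \<in> poly_vals S x \<Longrightarrow> inverse a \<in> poly_vals S x" using poly_vals_power by simp
qed simp

lemma gen_field_subset_poly_vals: "gen_field S {x} \<subseteq> poly_vals S x"
proof (rule gen_field_least)
  show "is_subfield (poly_vals S x)"
    unfolding is_subfield_def
    by (simp add: poly_vals_const poly_vals_add poly_vals_mult poly_vals_uminus poly_vals_inverse
        subfield_zero[OF S] subfield_one[OF S])
qed (use poly_vals_const poly_vals_var in blast)

end

subsection \<open>Univariate polynomials as multivariate ones\<close>

lemma mpoly_eval_superset:
  assumes "finite A" "Poly_Mapping.keys f \<subseteq> A"
  shows "mpoly_eval f r = (\<Sum>mn\<in>A. Poly_Mapping.lookup f mn *
            (\<Prod>i\<in>Poly_Mapping.keys (mn :: nat \<Rightarrow>\<^sub>0 nat). r i ^ Poly_Mapping.lookup mn i))"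
  unfolding mpoly_eval_def
  by (rule sum.mono_neutral_left[OF assms]) (simp add: in_keys_iff)

lemma mpoly_eval_add: "mpoly_eval (f + g) r = mpoly_eval f r + mpoly_eval g r"
proof -
  let ?A = "Poly_Mapping.keys f \<union> Poly_Mapping.keys g"
  have "finite ?A" by simp
  moreover have "Poly_Mapping.keys (f + g) \<subseteq> ?A" by (rule keys_add)
  ultimately show ?thesis
    by (simp add: mpoly_eval_superset[of ?A] lookup_add distrib_right sum.distrib)
qed

lemma mpoly_eval_sum: "mpoly_eval (\<Sum>i\<in>I. f i) r = (\<Sum>i\<in>I. mpoly_eval (f i) r)"
proof (induction I rule: infinite_finite_induct)
  case (insert i I)
  then show ?case by (simp add: mpoly_eval_add)
qed (simp_all add: mpoly_eval_def)

lemma mpoly_eval_single: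
  "mpoly_eval (Poly_Mapping.single mn c) r =
     c * (\<Prod>i\<in>Poly_Mapping.keys mn. r i ^ Poly_Mapping.lookup mn i)"
  by (cases "c = 0") (simp_all add: mpoly_eval_def)

lemma monomial_value_single:
  "(\<Prod>k\<in>Poly_Mapping.keys (Poly_Mapping.single j i). r k ^ Poly_Mapping.lookup (Poly_Mapping.single j i) k)
     = r j ^ i"
  by (cases "i = 0") simp_all

lemma mpoly_of_poly:
  fixes p :: "'a::field poly"
  assumes S: "is_subfield S" and p: "\<forall>i. coeff p i \<in> S"
  shows "\<exists>f :: (nat \<Rightarrow>\<^sub>0 nat) \<Rightarrow>\<^sub>0 'a.
           (\<forall>mn. Poly_Mapping.lookup f mn \<in> S) \<and>
           (\<forall>mn\<in>Poly_Mapping.keys f. Poly_Mapping.keys mn \<subseteq> {j}) \<and>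
           mpoly_eval f r = poly p (r j)"
proof -
  define f where
    "f = (\<Sum>i\<le>degree p. Poly_Mapping.single (Poly_Mapping.single j i) (coeff p i))"
  have "Poly_Mapping.lookup f mn \<in> S" for mn
    unfolding f_def lookup_sum lookup_single
    by (rule subfield_sum[OF S]) (simp add: when_def p subfield_zero[OF S])
  moreover have "Poly_Mapping.keys mn \<subseteq> {j}" if "mn \<in> Poly_Mapping.keys f" for mn
  proof -
    have "mn \<in> (\<Union>i\<le>degree p. Poly_Mapping.keys
        (Poly_Mapping.single (Poly_Mapping.single j i) (coeff p i)))"
      using subsetD[OF keys_sum that[unfolded f_def]] .
    then obtain i where "mn \<in> Poly_Mapping.keys (Poly_Mapping.single (Poly_Mapping.single j i) (coeff p i))"
      by blast
    then have "mn = Poly_Mapping.single j i" by (simp split: if_splits)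
    then show ?thesis by simp
  qed
  moreover have "mpoly_eval f r = poly p (r j)"
    unfolding f_def mpoly_eval_sum mpoly_eval_single poly_altdef monomial_value_single ..
  ultimately show ?thesis by blast
qed

theorem mainTheorem13:
  fixes S :: "'a::{field,finite} set" and r :: "nat \<Rightarrow> 'a" and n :: nat
  assumes "is_subfield S"
    and "n \<ge> 2"
    and "gen_field S (r ` {..<n}) = UNIV"
    and "\<forall>i j. i \<le> j \<and> j < n \<longrightarrow>
           ext_degree S (gen_field S {r j}) \<le> ext_degree S (gen_field S {r i})"
    and "\<exists>i. Suc i < n \<and> ext_degree S (gen_field S {r (Suc i)}) < ext_degree S (gen_field S {r i})"
  shows "\<exists>f :: (nat \<Rightarrow>\<^sub>0 nat) \<Rightarrow>\<^sub>0 'a.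
           (\<forall>mn. Poly_Mapping.lookup f mn \<in> S) \<and>
           (\<forall>mn\<in>Poly_Mapping.keys f. Poly_Mapping.keys mn \<subseteq> {..<n - 1}) \<and>
           ext_degree S (gen_field S {r (n - 1) + mpoly_eval f r})
             > ext_degree S (gen_field S {r (n - 1)})"
proof -
  define deg where "deg x = ext_degree S (gen_field S {x})" for x
  obtain i where i: "Suc i < n" "deg (r (Suc i)) < deg (r i)"
    using assms(5) unfolding deg_def by blast
  moreover have "deg (r (n - 1)) \<le> deg (r (Suc i))" "deg (r i) \<le> deg (r 0)"
    using assms(4) i(1) unfolding deg_def by auto
  ultimately have "deg (r (n - 1)) < deg (r 0)" by linarith
  then obtain t where t: "t \<in> gen_field S {r 0}" "deg (r (n - 1)) < deg (r (n - 1) + t)"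
    using ex_translate_ext_degree_gt[OF assms(1) is_subfield_gen_field] gen_field_upper
    unfolding deg_def by blast
  then obtain p where p: "t = poly p (r 0)" "\<forall>i. coeff p i \<in> S"
    using gen_field_subset_poly_vals[OF assms(1)] unfolding poly_vals_def by blast
  then obtain f :: "(nat \<Rightarrow>\<^sub>0 nat) \<Rightarrow>\<^sub>0 'a" where f:
    "\<forall>mn. Poly_Mapping.lookup f mn \<in> S" "\<forall>mn\<in>Poly_Mapping.keys f. Poly_Mapping.keys mn \<subseteq> {0}"
    "mpoly_eval f r = t"
    using mpoly_of_poly[OF assms(1) p(2), of 0 r] by blast
  moreover have "\<forall>mn\<in>Poly_Mapping.keys f. Poly_Mapping.keys mn \<subseteq> {..<n - 1}"
    using f(2) assms(2) by fastforce
  ultimately show ?thesis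
    using t unfolding deg_def by blast
qed

end
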